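(* Let $G$ be a 2-connected graph, let $(T,\mathcal{V})$ be a full tree decomposition of $G$, and let $t\in V(T)$. If $\mathrm{lct}(G)>|V_t|-2$, then $V_t$ has an $\ell$-attractor with $\ell\leq 2$, i.e. there is a longest cycle of $G$ that is an $\ell$-attractor for $V_t$ for some $\ell\le 2$.
   Context: All graphs are finite and simple. A tree decomposition of $G$ is a pair $(T,\mathcal{V})$, $T$ a tree and $\mathcal{V}=\{V_t:t\in V(T)\}$ a collection of distinct subsets (bags) of $V(G)$, such that every vertex lies in a bag, every edge has both ends in some bag, and for each vertex the nodes whose bags contain it form a subtree of $T$. If $G$ has treewidth $k$ (the minimum over tree decompositions of the maximum bag size minus one), a full tree decomposition is a tree decomposition with $|V_t|=k+1$ for all nodes $t$ and $|V_t\cap V_{t'}|=k$ for all edges $tt'\in E(T)$. $\mathrm{lct}(G)$ is the minimum cardinality of a set of vertices meeting every longest cycle of $G$. For $S\subseteq V(G)$, $S$ separates a vertex set $X$ if two vertices of $X$ lie in different components of $G-S$; a cycle $C$ crosses $S$ if $S$ separates $V(C)$, and otherwise $C$ is fenced by $S$. Two cycles are $S$-equivalent if they have the same intersection with $S$. A longest cycle $C$ is an attractor for $S$ if $C$ is fenced by $S$ and every longest cycle $S$-equivalent to $C$ is also fenced by $S$; it is an $\ell$-attractor for $S$ if moreover $|V(C)\cap S|=\ell$. *)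

theory Defs
  imports Main
begin

definition graph :: "'a set \<Rightarrow> 'a set set \<Rightarrow> bool" where
  "graph V E \<longleftrightarrow> finite V \<and>
     (\<forall>e\<in>E. \<exists>x y. x \<noteq> y \<and> e = {x, y} \<and> x \<in> V \<and> y \<in> V)"

definition adj_in :: "'a set set \<Rightarrow> 'a set \<Rightarrow> 'a \<Rightarrow> 'a \<Rightarrow> bool" where
  "adj_in E W x y \<longleftrightarrow> x \<in> W \<and> y \<in> W \<and> {x, y} \<in> E"

definition conn_in :: "'a set set \<Rightarrow> 'a set \<Rightarrow> 'a \<Rightarrow> 'a \<Rightarrow> bool" where
  "conn_in E W x y \<longleftrightarrow> x \<in> W \<and> y \<in> W \<and> (adj_in E W)\<^sup>*\<^sup>* x y"

definition connected_set :: "'a set set \<Rightarrow> 'a set \<Rightarrow> bool" where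
  "connected_set E W \<longleftrightarrow> W \<noteq> {} \<and> (\<forall>x\<in>W. \<forall>y\<in>W. conn_in E W x y)"

definition two_connected :: "'a set \<Rightarrow> 'a set set \<Rightarrow> bool" where
  "two_connected V E \<longleftrightarrow> graph V E \<and> card V > 2 \<and>
     (\<forall>X \<subseteq> V. card X < 2 \<longrightarrow> connected_set E (V - X))"

definition is_cycle :: "'a set \<Rightarrow> 'a set set \<Rightarrow> 'a list \<Rightarrow> bool" where
  "is_cycle V E cs \<longleftrightarrow> length cs \<ge> 3 \<and> distinct cs \<and> set cs \<subseteq> V \<and>
     (\<forall>i < length cs. {cs ! i, cs ! ((i + 1) mod length cs)} \<in> E)"

definition longest_cycle :: "'a set \<Rightarrow> 'a set set \<Rightarrow> 'a list \<Rightarrow> bool" where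
  "longest_cycle V E C \<longleftrightarrow> is_cycle V E C \<and>
     (\<forall>D. is_cycle V E D \<longrightarrow> length D \<le> length C)"

definition lct :: "'a set \<Rightarrow> 'a set set \<Rightarrow> nat" where
  "lct V E = (LEAST n. \<exists>X \<subseteq> V. card X = n \<and>
       (\<forall>C. longest_cycle V E C \<longrightarrow> set C \<inter> X \<noteq> {}))"

definition is_tree :: "'b set \<Rightarrow> 'b set set \<Rightarrow> bool" where
  "is_tree N TE \<longleftrightarrow> graph N TE \<and> connected_set TE N \<and> (\<nexists>cs. is_cycle N TE cs)"

definition tree_decomp :: "'a set \<Rightarrow> 'a set set \<Rightarrow> 'b set \<Rightarrow> 'b set set \<Rightarrow> ('b \<Rightarrow> 'a set) \<Rightarrow> bool" where
  "tree_decomp V E N TE bag \<longleftrightarrow> is_tree N TE \<and> inj_on bag N \<and>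
     (\<forall>t\<in>N. bag t \<subseteq> V) \<and>
     (\<forall>v\<in>V. \<exists>t\<in>N. v \<in> bag t) \<and>
     (\<forall>e\<in>E. \<exists>t\<in>N. e \<subseteq> bag t) \<and>
     (\<forall>v\<in>V. connected_set TE {t \<in> N. v \<in> bag t})"

text \<open>Treewidth: the least k such that some tree decomposition has all bags of
  size at most k+1 (the node type is nat; every finite tree is isomorphic to one
  on natural numbers).\<close>
definition treewidth :: "'a set \<Rightarrow> 'a set set \<Rightarrow> nat" where
  "treewidth V E = (LEAST k. \<exists>(N :: nat set) TE bag. tree_decomp V E N TE bag \<and>
       (\<forall>t\<in>N. card (bag t) \<le> k + 1))"

definition full_tree_decomp :: "'a set \<Rightarrow> 'a set set \<Rightarrow> 'b set \<Rightarrow> 'b set set \<Rightarrow> ('b \<Rightarrow> 'a set) \<Rightarrow> bool" where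
  "full_tree_decomp V E N TE bag \<longleftrightarrow> tree_decomp V E N TE bag \<and>
     (\<forall>t\<in>N. card (bag t) = treewidth V E + 1) \<and>
     (\<forall>t\<in>N. \<forall>t'\<in>N. {t, t'} \<in> TE \<longrightarrow> card (bag t \<inter> bag t') = treewidth V E)"

definition separates :: "'a set \<Rightarrow> 'a set set \<Rightarrow> 'a set \<Rightarrow> 'a set \<Rightarrow> bool" where
  "separates V E S X \<longleftrightarrow> (\<exists>x\<in>X - S. \<exists>y\<in>X - S. x \<in> V \<and> y \<in> V \<and> \<not> conn_in E (V - S) x y)"

definition crosses :: "'a set \<Rightarrow> 'a set set \<Rightarrow> 'a set \<Rightarrow> 'a list \<Rightarrow> bool" where
  "crosses V E S C \<longleftrightarrow> separates V E S (set C)"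

definition fenced :: "'a set \<Rightarrow> 'a set set \<Rightarrow> 'a set \<Rightarrow> 'a list \<Rightarrow> bool" where
  "fenced V E S C \<longleftrightarrow> \<not> crosses V E S C"

definition S_equiv :: "'a set \<Rightarrow> 'a list \<Rightarrow> 'a list \<Rightarrow> bool" where
  "S_equiv S C D \<longleftrightarrow> set C \<inter> S = set D \<inter> S"

definition attractor :: "'a set \<Rightarrow> 'a set set \<Rightarrow> 'a set \<Rightarrow> 'a list \<Rightarrow> bool" where
  "attractor V E S C \<longleftrightarrow> longest_cycle V E C \<and> fenced V E S C \<and>
     (\<forall>D. longest_cycle V E D \<and> S_equiv S C D \<longrightarrow> fenced V E S D)"

definition l_attractor :: "'a set \<Rightarrow> 'a set set \<Rightarrow> nat \<Rightarrow> 'a set \<Rightarrow> 'a list \<Rightarrow> bool" where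
  "l_attractor V E l S C \<longleftrightarrow> attractor V E S C \<and> card (set C \<inter> S) = l"

end

theory Submission
  imports Defs
begin

text \<open>Suppose every longest cycle met S = V_t in at least two vertices. As lct(G) > |S| - 2,
  every pair x, y of S is then exactly the trace on S of some longest cycle, and the longer of
  its two x-y arcs is a long bridge: more than half of the cycle, running inside one component
  of G - S. Fullness of the decomposition makes each component of G - S miss some vertex of S
  (the component lives on the side of a neighbour t' of t, and V_t is not contained in V_t').
  Long bridges for x y, y z and z x in three distinct components would close up to a cycle
  longer than a longest one. Combining these two facts, a component carrying the bridge of one
  pair also carries the bridges of ever larger stars of pairs, which is impossible in the finite
  set S. Hence some longest cycle meets S at most once, and it is trivially an attractor.\<close>

abbreviation walk :: "'a set set \<Rightarrow> 'a list \<Rightarrow> bool" where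
  "walk E \<equiv> successively (\<lambda>u v. {u, v} \<in> E)"

abbreviation component :: "'a set set \<Rightarrow> 'a set \<Rightarrow> 'a \<Rightarrow> 'a set" where
  "component E W h \<equiv> {u. conn_in E W h u}"

lemma is_cycle_iff_walk:
  "is_cycle V E cs \<longleftrightarrow> 3 \<le> length cs \<and> distinct cs \<and> set cs \<subseteq> V \<and>
     walk E cs \<and> {last cs, hd cs} \<in> E"
proof (cases "cs = []")
  case False
  define n where "n = length cs"
  have n: "0 < n" using False by (simp add: n_def)
  have all_split: "(\<forall>i < n. P i) \<longleftrightarrow> (\<forall>i. Suc i < n \<longrightarrow> P i) \<and> P (n - 1)" for P
  proof (intro iffI allI impI)
    fix i assume "(\<forall>i. Suc i < n \<longrightarrow> P i) \<and> P (n - 1)" "i < n"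
    then show "P i" by (metis Suc_lessI diff_Suc_1)
  qed (use n in auto)
  have "(\<forall>i < n. {cs ! i, cs ! ((i + 1) mod n)} \<in> E) \<longleftrightarrow>
        (\<forall>i. Suc i < n \<longrightarrow> {cs ! i, cs ! Suc i} \<in> E) \<and> {cs ! (n - 1), cs ! 0} \<in> E"
    unfolding all_split using n by simp
  then show ?thesis
    using False by (auto simp: is_cycle_def successively_conv_nth n_def last_conv_nth hd_conv_nth)
qed (simp add: is_cycle_def)

lemma is_cycle_rotate:
  assumes "is_cycle V E (xs @ ys)" shows "is_cycle V E (ys @ xs)"
proof (cases "xs = [] \<or> ys = []")
  case True then show ?thesis using assms by auto
next
  case False
  then show ?thesis
    using assms by (auto simp: is_cycle_iff_walk successively_append_iff insert_commute)
qed

lemma conn_in_sym: "conn_in E W x y \<Longrightarrow> conn_in E W y x"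
proof -
  have "symp (adj_in E W)" by (auto intro: sympI simp: adj_in_def insert_commute)
  then show "conn_in E W x y \<Longrightarrow> conn_in E W y x"
    unfolding conn_in_def by (auto dest: sympD[OF symp_rtranclp])
qed

lemma conn_in_trans: "conn_in E W x y \<Longrightarrow> conn_in E W y z \<Longrightarrow> conn_in E W x z"
  by (auto simp: conn_in_def)

lemma conn_in_edge: "x \<in> W \<Longrightarrow> y \<in> W \<Longrightarrow> {x, y} \<in> E \<Longrightarrow> conn_in E W x y"
  by (auto simp: conn_in_def adj_in_def)

lemma conn_in_mono: "W \<subseteq> W' \<Longrightarrow> conn_in E W x y \<Longrightarrow> conn_in E W' x y"
  unfolding conn_in_def adj_in_def
  by (auto elim: mono_rtranclp[rule_format, rotated])

lemma conn_in_walk: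
  "set P \<subseteq> W \<Longrightarrow> walk E P \<Longrightarrow> u \<in> set P \<Longrightarrow> conn_in E W (hd P) u"
proof (induction P)
  case (Cons p P)
  show ?case
  proof (cases "u = p")
    case True then show ?thesis using Cons.prems by (simp add: conn_in_def)
  next
    case False
    then have "P \<noteq> []" "conn_in E W (hd P) u" using Cons by (auto simp: successively_Cons)
    moreover have "conn_in E W p (hd P)"
      using Cons.prems \<open>P \<noteq> []\<close> by (intro conn_in_edge) (auto simp: successively_Cons)
    ultimately show ?thesis by (auto intro: conn_in_trans)
  qed
qed simp

lemma component_eq:
  "w \<in> component E W h1 \<Longrightarrow> w \<in> component E W h2 \<Longrightarrow> component E W h1 = component E W h2"
proof -
  assume "w \<in> component E W h1" "w \<in> component E W h2"
  then have "conn_in E W h1 h2" "conn_in E W h2 h1" by (auto intro: conn_in_trans conn_in_sym)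
  then show ?thesis by (auto intro: conn_in_trans)
qed

lemma connected_subset_component:
  assumes "connected_set E Y" "Y \<subseteq> W" "y \<in> Y" "y \<in> component E W h"
  shows "Y \<subseteq> component E W h"
proof
  fix x assume "x \<in> Y"
  then have "conn_in E W y x" using assms(1-3) by (auto simp: connected_set_def intro: conn_in_mono)
  then show "x \<in> component E W h" using assms(4) by (auto intro: conn_in_trans)
qed

lemma conn_in_distinct_walk:
  assumes "conn_in E W a b"
  shows "\<exists>p. p \<noteq> [] \<and> hd p = a \<and> last p = b \<and> distinct p \<and> set p \<subseteq> W \<and> walk E p"
proof -
  have "(adj_in E W)\<^sup>*\<^sup>* a b" "a \<in> W" using assms by (auto simp: conn_in_def)
  then show ?thesis
  proof (induction rule: rtranclp_induct)
    case base then show ?case by (intro exI[of _ "[a]"]) auto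
  next
    case (step y z)
    then obtain p where p: "p \<noteq> []" "hd p = a" "last p = y" "distinct p" "set p \<subseteq> W" "walk E p"
      by blast
    have yz: "{y, z} \<in> E" "z \<in> W" using step(2) by (auto simp: adj_in_def)
    show ?case
    proof (cases "z \<in> set p")
      case True
      then obtain p1 p2 where p12: "p = p1 @ z # p2" using split_list by fastforce
      then have "walk E (p1 @ [z])" "hd (p1 @ [z]) = a"
        using p by (auto simp: successively_append_iff hd_append split: if_splits)
      then show ?thesis using p p12 by (intro exI[of _ "p1 @ [z]"]) auto
    next
      case False
      then show ?thesis using p yz by (intro exI[of _ "p @ [z]"]) (auto simp: successively_append_iff)
    qed
  qed
qed

lemma conn_in_exit:
  assumes "conn_in E W r y" "r \<in> B" "y \<notin> B"
  shows "\<exists>a b. adj_in E W a b \<and> a \<in> B \<and> b \<notin> B"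
proof -
  have "(adj_in E W)\<^sup>*\<^sup>* r y" using assms(1) by (simp add: conn_in_def)
  then show ?thesis using assms(2,3) by (induction rule: rtranclp_induct) auto
qed

lemma conn_in_last_neighbour:
  assumes "conn_in E W s t" "s \<noteq> t"
  shows "\<exists>t'. adj_in E W t' t \<and> conn_in E (W - {t}) s t'"
proof -
  have "(adj_in E W)\<^sup>*\<^sup>* s t" "s \<in> W" using assms(1) by (auto simp: conn_in_def)
  have "(x \<noteq> t \<and> conn_in E (W - {t}) s x) \<or> (\<exists>t'. adj_in E W t' t \<and> conn_in E (W - {t}) s t')"
    if "(adj_in E W)\<^sup>*\<^sup>* s x" for x
    using that
  proof (induction rule: rtranclp_induct)
    case base then show ?case using assms \<open>s \<in> W\<close> by (simp add: conn_in_def)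
  next
    case (step y z)
    then show ?case
      by (cases "z = t") (auto simp: adj_in_def intro: conn_in_trans conn_in_edge)
  qed
  then show ?thesis using \<open>(adj_in E W)\<^sup>*\<^sup>* s t\<close> by blast
qed


lemma fenced_if_card_le_1:
  assumes C: "is_cycle V E C" and S: "card (set C \<inter> S) \<le> 1"
  shows "fenced V E S C"
proof -
  have "\<exists>R. set R = set C - S \<and> walk E R"
  proof (cases "set C \<inter> S = {}")
    case True then show ?thesis using C by (intro exI[of _ C]) (auto simp: is_cycle_iff_walk)
  next
    case False
    then obtain s where "s \<in> set C \<inter> S" by blast
    then have "set C \<inter> S = {s}" using S card_le_Suc0_iff_eq[of "set C \<inter> S"] by auto
    moreover obtain xs ys where xs_ys: "C = xs @ s # ys"
      using calculation split_list by fastforce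
    moreover have "is_cycle V E (s # ys @ xs)"
      using C xs_ys is_cycle_rotate[of V E xs "s # ys"] by simp
    ultimately show ?thesis
      using C by (intro exI[of _ "ys @ xs"]) (auto simp: is_cycle_iff_walk successively_Cons)
  qed
  then obtain R where R: "set R = set C - S" "walk E R" by blast
  have "set R \<subseteq> V - S" using R C by (auto simp: is_cycle_iff_walk)
  then have "conn_in E (V - S) x y" if "x \<in> set R" "y \<in> set R" for x y
    using conn_in_walk[of R "V - S" E] R(2) that by (blast intro: conn_in_trans conn_in_sym)
  then show ?thesis using R(1) by (auto simp: fenced_def crosses_def separates_def)
qed

text \<open>The interior of the longer of the two x-y arcs of a cycle of length L meeting S exactly
  in x and y.\<close>

definition long_bridge ::
    "'a set set \<Rightarrow> 'a set \<Rightarrow> 'a set \<Rightarrow> nat \<Rightarrow> 'a \<Rightarrow> 'a \<Rightarrow> 'a list \<Rightarrow> bool" where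
  "long_bridge E V S L x y P \<longleftrightarrow> P \<noteq> [] \<and> distinct P \<and> set P \<subseteq> V - S \<and> walk E P \<and>
     {x, hd P} \<in> E \<and> {last P, y} \<in> E \<and> L \<le> 2 * length P + 2"

lemma long_bridge_rev: "long_bridge E V S L x y P \<Longrightarrow> long_bridge E V S L y x (rev P)"
  unfolding long_bridge_def
  by (auto simp: hd_rev last_rev insert_commute elim: successively_mono)

lemma cycle_long_bridge:
  assumes D: "is_cycle V E D" and ab: "set D \<inter> S = {a, b}" "a \<noteq> b"
  shows "\<exists>P. long_bridge E V S (length D) a b P"
proof -
  obtain xs ys where D_split: "D = xs @ a # ys" using ab split_list[of a D] by auto
  then have "b \<in> set (ys @ xs)" using ab by auto
  then obtain us vs where uv: "ys @ xs = us @ b # vs" using split_list by fastforce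
  have "set (ys @ xs) = set (us @ b # vs)" "length (ys @ xs) = length (us @ b # vs)"
    by (simp_all only: uv)
  then have D': "set (a # us @ b # vs) = set D" "length D = length us + length vs + 2"
    using D_split by auto
  have "is_cycle V E (a # us @ b # vs)" using D D_split uv is_cycle_rotate[of V E xs "a # ys"] by simp
  then have cyc: "distinct (a # us @ b # vs)" "walk E (a # us @ b # vs)"
      "{last (a # us @ b # vs), a} \<in> E" "set us \<subseteq> V - S" "set vs \<subseteq> V - S"
    using ab D'(1) by (auto simp: is_cycle_iff_walk)
  have "3 \<le> length D" using D by (simp add: is_cycle_iff_walk)
  show ?thesis
  proof (cases "length vs \<le> length us")
    case True
    then have "us \<noteq> []" using D'(2) \<open>3 \<le> length D\<close> by auto
    then have "long_bridge E V S (length D) a b us"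
      using cyc D'(2) True by (simp add: long_bridge_def successively_Cons successively_append_iff)
    then show ?thesis by blast
  next
    case False
    then have "vs \<noteq> []" by auto
    then have "long_bridge E V S (length D) b a vs"
      using cyc D'(2) False by (simp add: long_bridge_def successively_Cons successively_append_iff)
    then show ?thesis by (blast dest: long_bridge_rev)
  qed
qed

lemma long_bridges_cycle:
  assumes "x \<noteq> y" "y \<noteq> z" "x \<noteq> z" "x \<in> S" "y \<in> S" "z \<in> S" "S \<subseteq> V" "3 \<le> L"
    and P1: "long_bridge E V S L x y P1" and P2: "long_bridge E V S L y z P2"
    and P3: "long_bridge E V S L z x P3"
    and "set P1 \<inter> set P2 = {}" "set P2 \<inter> set P3 = {}" "set P1 \<inter> set P3 = {}"
  shows "is_cycle V E (x # P1 @ y # P2 @ z # P3) \<and> L < length (x # P1 @ y # P2 @ z # P3)"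
proof -
  let ?C = "x # P1 @ y # P2 @ z # P3"
  have "walk E ?C" "{last ?C, hd ?C} \<in> E"
    using P1 P2 P3 by (auto simp: long_bridge_def successively_Cons successively_append_iff)
  moreover have "distinct ?C" "set ?C \<subseteq> V"
    using assms by (auto simp: long_bridge_def)
  moreover have "3 * L \<le> 2 * length ?C"
    using P1 P2 P3 by (simp add: long_bridge_def)
  ultimately show ?thesis using \<open>3 \<le> L\<close> by (simp add: is_cycle_iff_walk)
qed

lemma tree_neighbours_disconnected:
  assumes T: "is_tree N TE" and "t \<in> N" "t1 \<noteq> t2" "{t1, t} \<in> TE" "{t2, t} \<in> TE"
  shows "\<not> conn_in TE (N - {t}) t1 t2"
proof
  assume "conn_in TE (N - {t}) t1 t2"
  from conn_in_distinct_walk[OF this] obtain p where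
    p: "p \<noteq> []" "hd p = t1" "last p = t2" "distinct p" "set p \<subseteq> N - {t}" "walk TE p"
    by blast
  then have "2 \<le> length p" using \<open>t1 \<noteq> t2\<close> by (cases p) (auto simp: Suc_le_eq)
  then have "is_cycle N TE (t # p)"
    using p assms by (auto simp: is_cycle_iff_walk successively_Cons insert_commute)
  then show False using T by (auto simp: is_tree_def)
qed

lemma tree_decomp_bag_through_neighbour:
  assumes td: "tree_decomp V E N TE bag" and t: "t \<in> N" and tt': "{t', t} \<in> TE"
    and r: "r \<in> component TE (N - {t}) t'" and z: "z \<in> bag t" "z \<in> bag r"
  shows "z \<in> bag t'"
proof -
  let ?B = "component TE (N - {t}) t'" and ?Y = "{s \<in> N. z \<in> bag s}"
  have "z \<in> V" "r \<in> N" using td t z r by (auto simp: tree_decomp_def conn_in_def)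
  then have "conn_in TE ?Y r t" using td t z by (auto simp: tree_decomp_def connected_set_def)
  moreover have "t \<notin> ?B" by (simp add: conn_in_def)
  ultimately obtain a b where ab: "adj_in TE ?Y a b" "a \<in> ?B" "b \<notin> ?B"
    using conn_in_exit[of TE ?Y r t ?B] r by blast
  have "b = t"
  proof (rule ccontr)
    assume "b \<noteq> t"
    then have "conn_in TE (N - {t}) a b" using ab(1,2) by (auto simp: adj_in_def conn_in_def)
    then show False using ab(2,3) by (auto intro: conn_in_trans)
  qed
  have "a = t'"
    using tree_neighbours_disconnected[of N TE t t' a] td t tt' ab \<open>b = t\<close>
    by (auto simp: tree_decomp_def adj_in_def)
  then show ?thesis using ab(1) by (simp add: adj_in_def)
qed

lemma tree_decomp_component_side:
  assumes td: "tree_decomp V E N TE bag"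
    and s: "s \<in> component TE (N - {t}) t'" "v \<in> bag s"
    and u: "u \<in> component E (V - bag t) v" and r: "r \<in> N" "u \<in> bag r"
  shows "r \<in> component TE (N - {t}) t'"
proof -
  let ?B = "component TE (N - {t}) t'"
  have side: "{r \<in> N. w \<in> bag r} \<subseteq> ?B"
    if "w \<in> V - bag t" "r0 \<in> N" "w \<in> bag r0" "r0 \<in> ?B" for w r0
    using td that
    by (intro connected_subset_component[of TE _ "N - {t}" r0]) (auto simp: tree_decomp_def)
  have v: "v \<in> V - bag t" and "(adj_in E (V - bag t))\<^sup>*\<^sup>* v u"
    using u by (auto simp: conn_in_def)
  from this(2) have "{r \<in> N. u \<in> bag r} \<subseteq> ?B"
  proof (induction rule: rtranclp_induct)
    case base
    have "s \<in> N" using s(1) by (simp add: conn_in_def)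
    then show ?case using side[OF v _ s(2)] s(1) by blast
  next
    case (step u1 u2)
    then obtain r0 where r0: "r0 \<in> N" "u1 \<in> bag r0" "u2 \<in> bag r0"
      using td by (auto simp: tree_decomp_def adj_in_def)
    then have "r0 \<in> ?B" using step.IH by blast
    moreover have "u2 \<in> V - bag t" using step.hyps(2) by (simp add: adj_in_def)
    ultimately show ?case using side r0 by blast
  qed
  then show ?thesis using r by blast
qed

lemma component_misses_bag_vertex:
  assumes td: "tree_decomp V E N TE bag" and t: "t \<in> N"
    and full: "\<And>t'. {t, t'} \<in> TE \<Longrightarrow> \<not> bag t \<subseteq> bag t'" and v: "v \<in> V - bag t"
  shows "\<exists>z \<in> bag t. \<forall>u \<in> component E (V - bag t) v. {z, u} \<notin> E"
proof -
  obtain s where s: "s \<in> N" "v \<in> bag s" using td v by (auto simp: tree_decomp_def)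
  then have "conn_in TE N s t" "s \<noteq> t"
    using td t v by (auto simp: tree_decomp_def is_tree_def connected_set_def)
  from conn_in_last_neighbour[OF this] obtain t' where
    t': "adj_in TE N t' t" "conn_in TE (N - {t}) s t'" by blast
  then have tt': "{t', t} \<in> TE" by (simp add: adj_in_def)
  then have "{t, t'} \<in> TE" by (simp add: insert_commute)
  then obtain z where z: "z \<in> bag t" "z \<notin> bag t'" using full by blast
  have "{z, u} \<notin> E" if u: "u \<in> component E (V - bag t) v" for u
  proof
    assume "{z, u} \<in> E"
    then obtain r where "r \<in> N" "{z, u} \<subseteq> bag r" using td by (auto simp: tree_decomp_def)
    then have "r \<in> component TE (N - {t}) t'"
      using tree_decomp_component_side[OF td _ s(2) u] conn_in_sym[OF t'(2)] by auto
    then show False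
      using tree_decomp_bag_through_neighbour[OF td t tt'] z \<open>{z, u} \<subseteq> bag r\<close> by auto
  qed
  then show ?thesis using z by blast
qed

lemma pair_labelling_card_le_1:
  fixes c :: "'a set \<Rightarrow> 'b" and touches :: "'a \<Rightarrow> 'b \<Rightarrow> bool"
  assumes fin: "finite S"
    and touches: "\<And>x y. x \<in> S \<Longrightarrow> y \<in> S \<Longrightarrow> x \<noteq> y \<Longrightarrow> touches x (c {x, y})"
    and avoids: "\<And>x y. x \<in> S \<Longrightarrow> y \<in> S \<Longrightarrow> x \<noteq> y \<Longrightarrow> \<exists>z \<in> S. \<not> touches z (c {x, y})"
    and transfer: "\<And>x y z. x \<in> S \<Longrightarrow> y \<in> S \<Longrightarrow> z \<in> S \<Longrightarrow> x \<noteq> y \<Longrightarrow> y \<noteq> z \<Longrightarrow> x \<noteq> z \<Longrightarrow>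
      \<not> touches z (c {x, y}) \<Longrightarrow> c {x, z} = c {y, z}"
  shows "card S \<le> 1"
proof (rule ccontr)
  assume "\<not> card S \<le> 1"
  then obtain a b where ab: "a \<in> S" "b \<in> S" "a \<noteq> b"
    using card_le_Suc0_iff_eq[OF fin] by auto
  have avoider_new: "z \<noteq> x \<and> z \<noteq> y"
    if "x \<in> S" "y \<in> S" "x \<noteq> y" "\<not> touches z (c {x, y})" for x y z
  proof -
    have "c {y, x} = c {x, y}" by (simp add: insert_commute)
    then show ?thesis using touches[OF that(1-3)] touches[OF that(2,1)] that(3,4) by metis
  qed
  txt \<open>The vertex avoided by the common label of a star is the centre of a larger star.\<close>
  have star: "\<exists>U w D. U \<subseteq> S \<and> w \<in> S - U \<and> card U = n + 2 \<and> (\<forall>u \<in> U. c {u, w} = D)" for n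
  proof (induction n)
    case 0
    obtain z where z: "z \<in> S" "\<not> touches z (c {a, b})" using avoids[OF ab] by blast
    then have "z \<noteq> a" "z \<noteq> b" using avoider_new[OF ab] by blast+
    then have "c {a, z} = c {b, z}" using transfer[OF ab(1,2) z(1) ab(3)] z(2) by blast
    then show ?case using ab z \<open>z \<noteq> a\<close> \<open>z \<noteq> b\<close>
      by (intro exI[of _ "{a, b}"] exI[of _ z] exI[of _ "c {a, z}"]) auto
  next
    case (Suc n)
    then obtain U w D where U: "U \<subseteq> S" "w \<in> S" "w \<notin> U" "card U = n + 2"
        "\<forall>u \<in> U. c {u, w} = D"
      by blast
    have "U \<noteq> {}" using U(4) by auto
    then obtain u0 where u0: "u0 \<in> U" "u0 \<noteq> w" using U(3) by blast
    then have "c {u0, w} = D" "u0 \<in> S" using U by auto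
    then obtain z where z: "z \<in> S" "\<not> touches z D" using avoids[OF _ U(2) u0(2)] by blast
    have "z \<noteq> w" using avoider_new[OF \<open>u0 \<in> S\<close> U(2) u0(2)] z \<open>c {u0, w} = D\<close> by blast
    have "z \<notin> U"
      using touches[OF _ U(2) \<open>z \<noteq> w\<close>] z U(5) by auto
    have "c {u, z} = c {w, z}" if "u \<in> U" for u
    proof -
      have "u \<in> S" "u \<noteq> w" "u \<noteq> z" "c {u, w} = D" using that U \<open>z \<notin> U\<close> by auto
      then show ?thesis using transfer[OF _ U(2) z(1)] z(2) \<open>z \<noteq> w\<close> by blast
    qed
    moreover have "finite U" using U(1) fin finite_subset by blast
    ultimately show ?case using U z \<open>z \<noteq> w\<close> \<open>z \<notin> U\<close>
      by (intro exI[of _ "insert w U"] exI[of _ z] exI[of _ "c {w, z}"]) simp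
  qed
  then obtain U where "U \<subseteq> S" "card U = card S + 2" by blast
  then show False using card_mono[OF fin, of U] by simp
qed

lemma longest_cycle_avoiding:
  assumes "X \<subseteq> V" "card X < lct V E"
  shows "\<exists>C. longest_cycle V E C \<and> set C \<inter> X = {}"
proof (rule ccontr)
  assume "\<not> ?thesis"
  then have "lct V E \<le> card X" unfolding lct_def using assms(1) by (intro Least_le) blast
  then show False using assms(2) by simp
qed

lemma symmetric_choice_on_pairs:
  assumes ex: "\<And>x y. x \<in> S \<Longrightarrow> y \<in> S \<Longrightarrow> x \<noteq> y \<Longrightarrow> \<exists>K. Q x y K"
    and sym: "\<And>x y K. Q x y K \<Longrightarrow> Q y x K"
  shows "\<exists>c. \<forall>x \<in> S. \<forall>y \<in> S. x \<noteq> y \<longrightarrow> Q x y (c {x, y})"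
proof (intro exI ballI impI)
  fix x y assume "x \<in> S" "y \<in> S" "x \<noteq> y"
  then have "\<exists>K x' y'. {x, y} = {x', y'} \<and> Q x' y' K" using ex by blast
  then have "\<exists>x' y'. {x, y} = {x', y'} \<and> Q x' y' (SOME K. \<exists>x' y'. {x, y} = {x', y'} \<and> Q x' y' K)"
    by (rule someI_ex)
  then obtain x' y' where "{x, y} = {x', y'}"
    and Q: "Q x' y' (SOME K. \<exists>x' y'. {x, y} = {x', y'} \<and> Q x' y' K)" by blast
  then have "(x' = x \<and> y' = y) \<or> (x' = y \<and> y' = x)" by (auto simp: doubleton_eq_iff)
  then show "Q x y ((\<lambda>e. SOME K. \<exists>x' y'. e = {x', y'} \<and> Q x' y' K) {x, y})"
    using Q sym by auto
qed

lemma component_disjoint: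
  assumes "component E W h1 \<noteq> component E W h2"
  shows "component E W h1 \<inter> component E W h2 = {}"
proof (rule equals0I)
  fix w assume "w \<in> component E W h1 \<inter> component E W h2"
  then show False using component_eq[of w E W h1 h2] assms by blast
qed

lemma long_bridge_subset_component:
  "long_bridge E V S L x y P \<Longrightarrow> set P \<subseteq> component E (V - S) (hd P)"
  unfolding long_bridge_def using conn_in_walk[of P "V - S" E] by blast

definition carries_long_bridge ::
    "'a set \<Rightarrow> 'a set set \<Rightarrow> 'a set \<Rightarrow> nat \<Rightarrow> 'a \<Rightarrow> 'a \<Rightarrow> 'a set \<Rightarrow> bool" where
  "carries_long_bridge V E S L x y K \<longleftrightarrow>
     (\<exists>P. long_bridge E V S L x y P \<and> K = component E (V - S) (hd P))"

lemma carries_long_bridge_sym: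
  assumes "carries_long_bridge V E S L x y K"
  shows "carries_long_bridge V E S L y x K"
proof -
  obtain P where P: "long_bridge E V S L x y P" "K = component E (V - S) (hd P)"
    using assms by (auto simp: carries_long_bridge_def)
  then have "last P \<in> set P" "set P \<subseteq> V - S" by (auto simp: long_bridge_def)
  then have "last P \<in> K" "last P \<in> component E (V - S) (last P)"
    using long_bridge_subset_component[OF P(1)] P(2) by (auto simp: conn_in_def)
  then have "K = component E (V - S) (hd (rev P))"
    using component_eq[of "last P" E "V - S" "hd P" "last P"] P(2) by (simp add: hd_rev)
  then show ?thesis
    unfolding carries_long_bridge_def using long_bridge_rev[OF P(1)] by blast
qed

lemma carries_long_bridge_witness:
  assumes "carries_long_bridge V E S L x y K"
  obtains h where "h \<in> V - S" "h \<in> K" "{x, h} \<in> E" "K = component E (V - S) h"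
proof -
  obtain P where P: "long_bridge E V S L x y P" "K = component E (V - S) (hd P)"
    using assms by (auto simp: carries_long_bridge_def)
  then have "hd P \<in> V - S" "{x, hd P} \<in> E" using hd_in_set by (auto simp: long_bridge_def)
  then show thesis using that P(2) by (simp add: conn_in_def)
qed

text \<open>Three distinct components carrying long bridges around a triangle of S would close up
  to a cycle longer than L.\<close>

lemma carries_long_bridge_transfer:
  assumes longest: "\<And>C. is_cycle V E C \<Longrightarrow> length C \<le> L" and "3 \<le> L" "S \<subseteq> V"
    and "x \<in> S" "y \<in> S" "z \<in> S" "x \<noteq> y" "y \<noteq> z" "x \<noteq> z"
    and K1: "carries_long_bridge V E S L x y K1" and K2: "carries_long_bridge V E S L y z K2"
    and K3: "carries_long_bridge V E S L z x K3"
    and avoid: "\<forall>u \<in> K1. {z, u} \<notin> E"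
  shows "K2 = K3"
proof (rule ccontr)
  assume "K2 \<noteq> K3"
  obtain P1 P2 P3 where P: "long_bridge E V S L x y P1" "long_bridge E V S L y z P2"
      "long_bridge E V S L z x P3" and K: "K1 = component E (V - S) (hd P1)"
      "K2 = component E (V - S) (hd P2)" "K3 = component E (V - S) (hd P3)"
    using K1 K2 K3 by (auto simp: carries_long_bridge_def)
  have "\<exists>u \<in> K2. {z, u} \<in> E" "\<exists>u \<in> K3. {z, u} \<in> E"
    using carries_long_bridge_witness[OF carries_long_bridge_sym[OF K2]]
      carries_long_bridge_witness[OF K3] by metis+
  then have "K1 \<noteq> K2" "K1 \<noteq> K3" using avoid by blast+
  then have "K1 \<inter> K2 = {}" "K2 \<inter> K3 = {}" "K1 \<inter> K3 = {}"
    using \<open>K2 \<noteq> K3\<close> unfolding K by (simp_all add: component_disjoint)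
  moreover have "set P1 \<subseteq> K1" "set P2 \<subseteq> K2" "set P3 \<subseteq> K3"
    using long_bridge_subset_component[OF P(1)] long_bridge_subset_component[OF P(2)]
      long_bridge_subset_component[OF P(3)] K by simp_all
  ultimately have "set P1 \<inter> set P2 = {}" "set P2 \<inter> set P3 = {}" "set P1 \<inter> set P3 = {}"
    by blast+
  from long_bridges_cycle[OF assms(7,8,9,4,5,6,3,2) P this]
  have "is_cycle V E (x # P1 @ y # P2 @ z # P3)" "L < length (x # P1 @ y # P2 @ z # P3)"
    by blast+
  then show False using longest by fastforce
qed

lemma longest_cycle_through_pair:
  assumes "S \<subseteq> V" "finite S" "int (lct V E) > int (card S) - 2"
    and meets: "\<And>C. longest_cycle V E C \<Longrightarrow> 2 \<le> card (set C \<inter> S)"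
    and xy: "x \<in> S" "y \<in> S" "x \<noteq> y"
  shows "\<exists>C. longest_cycle V E C \<and> set C \<inter> S = {x, y}"
proof -
  have "card {x, y} \<le> card S" using xy assms(2) by (intro card_mono) auto
  then have "card (S - {x, y}) < lct V E"
    using xy assms(2,3) by (simp add: card_Diff_subset)
  then obtain C where C: "longest_cycle V E C" "set C \<inter> (S - {x, y}) = {}"
    using longest_cycle_avoiding[of "S - {x, y}" V E] assms(1) by blast
  then have "set C \<inter> S \<subseteq> {x, y}" "card {x, y} \<le> card (set C \<inter> S)"
    using meets[OF C(1)] xy by auto
  then show ?thesis using C(1) card_seteq[of "{x, y}" "set C \<inter> S"] by auto
qed

lemma full_tree_decomp_bag_not_subset:
  assumes ftd: "full_tree_decomp V E N TE bag" and t: "t \<in> N" and tt': "{t, t'} \<in> TE"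
  shows "\<not> bag t \<subseteq> bag t'"
proof
  assume "bag t \<subseteq> bag t'"
  then have "bag t \<inter> bag t' = bag t" by blast
  obtain p q where "{t, t'} = {p, q}" "p \<in> N" "q \<in> N"
    using ftd tt' by (auto simp: full_tree_decomp_def tree_decomp_def is_tree_def graph_def)
  then have "t' \<in> N" by (auto simp: doubleton_eq_iff)
  then have "card (bag t \<inter> bag t') + 1 = card (bag t)"
    using ftd t tt' by (simp add: full_tree_decomp_def)
  then show False using \<open>bag t \<inter> bag t' = bag t\<close> by simp
qed

lemma full_tree_decomp_bag_card_ge_2:
  assumes tc: "two_connected V E" and ftd: "full_tree_decomp V E N TE bag" and t: "t \<in> N"
  shows "2 \<le> card (bag t)"
proof -
  have G: "graph V E" "2 < card V" "\<forall>X \<subseteq> V. card X < 2 \<longrightarrow> connected_set E (V - X)"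
    using tc by (simp_all add: two_connected_def)
  then have conn: "connected_set E V" using G(3)[rule_format, of "{}"] by simp
  have "finite V" using G(1) by (simp add: graph_def)
  then obtain x y where xy: "x \<in> V" "y \<in> V" "x \<noteq> y"
    using G(2) card_le_Suc0_iff_eq[of V] by auto
  then have "(adj_in E V)\<^sup>*\<^sup>* x y" using conn by (simp add: connected_set_def conn_in_def)
  then obtain b where "adj_in E V x b" using xy(3) by (blast elim: converse_rtranclpE)
  then have "{x, b} \<in> E" by (simp add: adj_in_def)
  then obtain p q where "p \<noteq> q" "{x, b} = {p, q}" using G(1) by (auto simp: graph_def)
  then have "card {x, b} = 2" by (auto simp: doubleton_eq_iff)
  obtain r where r: "r \<in> N" "{x, b} \<subseteq> bag r"
    using ftd \<open>{x, b} \<in> E\<close> by (auto simp: full_tree_decomp_def tree_decomp_def)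
  then have "finite (bag r)" using ftd \<open>finite V\<close>
    by (auto simp: full_tree_decomp_def tree_decomp_def intro: finite_subset)
  then have "2 \<le> card (bag r)" using r(2) \<open>card {x, b} = 2\<close> card_mono by metis
  moreover have "card (bag r) = card (bag t)" using ftd r(1) t by (simp add: full_tree_decomp_def)
  ultimately show ?thesis by simp
qed

lemma bag_pairs_carrying_long_bridges_card_le_1:
  assumes td: "tree_decomp V E N TE bag" and t: "t \<in> N" and fin: "finite (bag t)"
    and not_subset: "\<And>t'. {t, t'} \<in> TE \<Longrightarrow> \<not> bag t \<subseteq> bag t'"
    and longest: "\<And>C. is_cycle V E C \<Longrightarrow> length C \<le> L" and "3 \<le> L"
    and c: "\<And>x y. x \<in> bag t \<Longrightarrow> y \<in> bag t \<Longrightarrow> x \<noteq> y \<Longrightarrow>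
      carries_long_bridge V E (bag t) L x y (c {x, y})"
  shows "card (bag t) \<le> 1"
proof (rule pair_labelling_card_le_1[OF fin, of "\<lambda>z K. \<exists>u \<in> K. {z, u} \<in> E" c])
  show "\<exists>u \<in> c {x, y}. {x, u} \<in> E" if "x \<in> bag t" "y \<in> bag t" "x \<noteq> y" for x y
    using carries_long_bridge_witness[OF c[OF that]] by metis
  show "\<exists>z \<in> bag t. \<not> (\<exists>u \<in> c {x, y}. {z, u} \<in> E)"
    if xy: "x \<in> bag t" "y \<in> bag t" "x \<noteq> y" for x y
  proof -
    obtain h where "h \<in> V - bag t" "c {x, y} = component E (V - bag t) h"
      using carries_long_bridge_witness[OF c[OF xy]] by metis
    then show ?thesis using component_misses_bag_vertex[OF td t not_subset] by auto
  qed
  have "bag t \<subseteq> V" using td t by (simp add: tree_decomp_def)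
  then show "c {x, z} = c {y, z}"
    if "x \<in> bag t" "y \<in> bag t" "z \<in> bag t" "x \<noteq> y" "y \<noteq> z" "x \<noteq> z"
      and "\<not> (\<exists>u \<in> c {x, y}. {z, u} \<in> E)" for x y z
    using carries_long_bridge_transfer[OF longest \<open>3 \<le> L\<close> _ that(1-6)
        c[OF that(1,2,4)] c[OF that(2,3,5)] c[of z x]] that
    by (auto simp: insert_commute)
qed

lemma exists_longest_cycle_meeting_bag_at_most_once:
  assumes tc: "two_connected V E" and ftd: "full_tree_decomp V E N TE bag" and t: "t \<in> N"
    and lct: "int (lct V E) > int (card (bag t)) - 2"
  shows "\<exists>C. longest_cycle V E C \<and> card (set C \<inter> bag t) \<le> 1"
proof (rule ccontr)
  assume "\<not> ?thesis"
  then have meets: "\<And>C. longest_cycle V E C \<Longrightarrow> 2 \<le> card (set C \<inter> bag t)" by fastforce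
  have td: "tree_decomp V E N TE bag" using ftd by (simp add: full_tree_decomp_def)
  then have SV: "bag t \<subseteq> V" and fin: "finite (bag t)"
    using t tc by (auto simp: tree_decomp_def two_connected_def graph_def intro: finite_subset)
  have through_pair: "\<exists>C. longest_cycle V E C \<and> set C \<inter> bag t = {x, y}"
    if "x \<in> bag t" "y \<in> bag t" "x \<noteq> y" for x y
    using longest_cycle_through_pair[OF SV fin lct _ that] meets by blast
  have two: "2 \<le> card (bag t)" by (rule full_tree_decomp_bag_card_ge_2[OF tc ftd t])
  then obtain x0 y0 where "x0 \<in> bag t" "y0 \<in> bag t" "x0 \<noteq> y0"
    using card_le_Suc0_iff_eq[OF fin] by auto
  then obtain C0 where C0: "longest_cycle V E C0" using through_pair by blast
  define L where "L = length C0"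
  have longest: "\<And>C. is_cycle V E C \<Longrightarrow> length C \<le> L" and "3 \<le> L"
    using C0 by (auto simp: L_def longest_cycle_def is_cycle_def)
  have "\<exists>K. carries_long_bridge V E (bag t) L x y K"
    if xy: "x \<in> bag t" "y \<in> bag t" "x \<noteq> y" for x y
  proof -
    obtain C where C: "longest_cycle V E C" "set C \<inter> bag t = {x, y}"
      using through_pair[OF xy] by blast
    then have "length C = L" using C0 by (simp add: L_def longest_cycle_def le_antisym)
    then obtain P where "long_bridge E V (bag t) L x y P"
      using cycle_long_bridge[of V E C "bag t" x y] C xy(3) by (auto simp: longest_cycle_def)
    then show ?thesis by (auto simp: carries_long_bridge_def)
  qed
  then obtain c where "\<And>x y. x \<in> bag t \<Longrightarrow> y \<in> bag t \<Longrightarrow> x \<noteq> y \<Longrightarrow>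
      carries_long_bridge V E (bag t) L x y (c {x, y})"
    using symmetric_choice_on_pairs[of "bag t"] carries_long_bridge_sym by metis
  then have "card (bag t) \<le> 1"
    using bag_pairs_carrying_long_bridges_card_le_1[OF td t fin _ longest \<open>3 \<le> L\<close>]
      full_tree_decomp_bag_not_subset[OF ftd t] by blast
  with two show False by simp
qed

lemma l_attractor_if_card_le_1:
  assumes "longest_cycle V E C" "card (set C \<inter> S) \<le> 1"
  shows "l_attractor V E (card (set C \<inter> S)) S C"
  using assms fenced_if_card_le_1
  by (auto simp: l_attractor_def attractor_def longest_cycle_def S_equiv_def)

theorem lemma6p1:
  fixes V :: "'a set" and E :: "'a set set"
    and N :: "'b set" and TE :: "'b set set" and bag :: "'b \<Rightarrow> 'a set" and t :: 'b
  assumes "two_connected V E"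
    and "full_tree_decomp V E N TE bag"
    and "t \<in> N"
    and "int (lct V E) > int (card (bag t)) - 2"
  shows "\<exists>l C. l \<le> 2 \<and> l_attractor V E l (bag t) C"
proof -
  obtain C where "longest_cycle V E C" "card (set C \<inter> bag t) \<le> 1"
    using exists_longest_cycle_meeting_bag_at_most_once[OF assms] by blast
  then have "l_attractor V E (card (set C \<inter> bag t)) (bag t) C"
    by (rule l_attractor_if_card_le_1)
  moreover have "card (set C \<inter> bag t) \<le> 2" using \<open>card (set C \<inter> bag t) \<le> 1\<close> by simp
  ultimately show ?thesis by blast
qed

end
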